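(* For every positive integer $n$, $$\sum_{k=1}^n(2k+1)M_k^2=\sum_{k=0}^{n+1}\frac{(4n-2k+3)(n+k+2)}{n+2}\binom{n+k+1}{2k}\binom{2k}{k}\binom{2k+1}{k}(-3)^{n+1-k}.$$
   Context: $M_n=\sum_{k=0}^{\lfloor n/2\rfloor}\binom{n}{2k}\frac{1}{k+1}\binom{2k}{k}$ is the $n$-th Motzkin number. *)

theory Defs
  imports Complex_Main
begin

text \<open>n-th Motzkin number, defined by the formula in the paper
  (computed over the rationals, as a literal reading of 1/(k+1)).\<close>
definition motzkin :: "nat \<Rightarrow> rat" where
  "motzkin n = (\<Sum>k = 0..n div 2. of_nat (n choose (2*k)) * (1 / of_nat (k+1)) * of_nat ((2*k) choose k))"

end

theory Submission
  imports Defs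
begin

text \<open>Both sides satisfy the same third-order linear recurrence with polynomial coefficients
  and agree for n = 0, 1, 2. For the right-hand side the recurrence is obtained by creative
  telescoping (Zeilberger's algorithm) on its hypergeometric summand. For the left-hand side it
  follows from a closed form as a quadratic form in M(n) and M(n+1), which
  in turn follows by induction from the Motzkin recurrence
  (n+4) M(n+2) = (2n+5) M(n+1) + 3(n+1) M(n), itself proved by creative telescoping
  on the defining sum.\<close>

lemma of_nat_add_pos_nonzero:
  "(of_nat n + numeral c :: rat) \<noteq> 0" "(numeral c + of_nat n :: rat) \<noteq> 0"
  "(of_nat n + 1 :: rat) \<noteq> 0" "(1 + of_nat n :: rat) \<noteq> 0"
  using of_nat_0_le_iff[of n, where 'a=rat] zero_less_numeral[of c, where 'a=rat] by linarith+

lemma recurrence3_unique: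
  fixes f g :: "nat \<Rightarrow> 'a::field"
  assumes lead: "\<And>n. s n \<noteq> 0"
    and rec_f: "\<And>n. p n * f n + q n * f (n+1) + r n * f (n+2) + s n * f (n+3) = 0"
    and rec_g: "\<And>n. p n * g n + q n * g (n+1) + r n * g (n+2) + s n * g (n+3) = 0"
    and init: "f 0 = g 0" "f 1 = g 1" "f 2 = g 2"
  shows "f n = g n"
proof (induction n rule: less_induct)
  case (less n)
  show ?case
  proof (cases "n < 3")
    case True
    then have "n = 0 \<or> n = 1 \<or> n = 2" by auto
    then show ?thesis using init by auto
  next
    case False
    then obtain m where m: "n = m + 3" by (metis add.commute le_Suc_ex not_less)
    have "f m = g m" "f (m+1) = g (m+1)" "f (m+2) = g (m+2)" using less m by simp_all
    then have "p m * f m + q m * f (m+1) + r m * f (m+2) + s m * f (m+3)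
        = p m * f m + q m * f (m+1) + r m * f (m+2) + s m * g (m+3)"
      using rec_f[of m] rec_g[of m] by simp
    then have "s m * f (m+3) = s m * g (m+3)" by simp
    then show ?thesis using lead[of m] m by simp
  qed
qed

text \<open>inv_fact_diff a i is the falling factorial a(a-1)...(a-i+1) divided by a!; it vanishes
  for i > a, which lets hypergeometric summands be written without range side conditions.\<close>

definition inv_fact_diff :: "nat \<Rightarrow> nat \<Rightarrow> rat" where
  "inv_fact_diff a i = (if i \<le> a then 1 / fact (a - i) else 0)"

lemma inv_fact_diff_eq_prod:
  "inv_fact_diff a i = (\<Prod>l<i. (of_nat a - of_nat l)) / fact a"
proof (induction i)
  case 0
  then show ?case by (simp add: inv_fact_diff_def)
next
  case (Suc i)
  show ?case
  proof (cases "Suc i \<le> a")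
    case True
    have "a - i = Suc (a - Suc i)" using True by simp
    then have "fact (a - i) = (of_nat (a - i) :: rat) * fact (a - Suc i)"
      by simp
    then have "inv_fact_diff a (Suc i) = of_nat (a - i) * inv_fact_diff a i"
      using True by (simp add: inv_fact_diff_def field_simps)
    also have "of_nat (a - i) = (of_nat a - of_nat i :: rat)"
      using True by (simp add: of_nat_diff)
    finally show ?thesis using Suc by simp
  next
    case False
    have "(\<Prod>l<Suc i. (of_nat a - of_nat l :: rat)) = 0"
      by (rule prod_zero) (use False in auto)
    then show ?thesis using False by (simp add: inv_fact_diff_def)
  qed
qed

lemma inv_fact_diff_add: "inv_fact_diff (x + c) (y + c) = inv_fact_diff x y"
  by (simp add: inv_fact_diff_def)

lemma inv_fact_diff_add_left: "y \<le> x \<Longrightarrow> inv_fact_diff x (y + i) = inv_fact_diff (x - y) i"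
  by (auto simp add: inv_fact_diff_def)

lemma power_diff_mult_inv_fact_diff:
  "(c::rat) \<noteq> 0 \<Longrightarrow> c ^ (a - i) * inv_fact_diff a i = inv_fact_diff a i * c ^ a * (1/c) ^ i"
  by (cases "i \<le> a") (simp_all add: inv_fact_diff_def power_diff power_one_over)

lemma fact_add_eq_prod: "(fact (m + j) :: rat) = fact m * (\<Prod>i<j. of_nat (m + 1 + i))"
  by (induction j) (simp_all add: algebra_simps)

subsection \<open>The Motzkin recurrence\<close>

definition motzkin_summand :: "nat \<Rightarrow> nat \<Rightarrow> rat" where
  "motzkin_summand n k = of_nat (n choose (2*k)) * (1 / of_nat (k+1)) * of_nat ((2*k) choose k)"

lemma motzkin_summand_fact:
  "motzkin_summand n k = fact n * inv_fact_diff n (2*k) / (fact k * fact (k+1))"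
proof (cases "2*k \<le> n")
  case True
  have "motzkin_summand n k = fact n / (fact (2*k) * fact (n - 2*k)) * (1 / of_nat (k+1))
      * (fact (2*k) / (fact k * fact (2*k - k)))"
    unfolding motzkin_summand_def using True by (simp add: binomial_fact)
  also have "\<dots> = fact n * inv_fact_diff n (2*k) / (fact k * fact (k+1))"
    using True by (simp add: inv_fact_diff_def mult_2 divide_simps)
  finally show ?thesis .
next
  case False
  then show ?thesis by (simp add: motzkin_summand_def inv_fact_diff_def)
qed

lemma motzkin_eq_sum_summand:
  assumes "n div 2 \<le> K"
  shows "motzkin n = (\<Sum>k=0..K. motzkin_summand n k)"
proof -
  have "motzkin n = (\<Sum>k=0..n div 2. motzkin_summand n k)"
    by (simp add: motzkin_def motzkin_summand_def)
  also have "\<dots> = (\<Sum>k=0..K. motzkin_summand n k)"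
  proof (rule sum.mono_neutral_left)
    show "\<forall>i\<in>{0..K} - {0..n div 2}. motzkin_summand n i = 0"
      by (auto simp add: motzkin_summand_def binomial_eq_0)
  qed (use assms in auto)
  finally show ?thesis .
qed

definition motzkin_cert :: "nat \<Rightarrow> nat \<Rightarrow> rat" where
  "motzkin_cert n k = -4 * of_nat (n+1) * of_nat k * of_nat (k+1) * fact n
     * inv_fact_diff (n+2) (2*k) / (fact k * fact (k+1))"

lemma motzkin_summand_telescope:
  "-3 * of_nat (n+1) * motzkin_summand n k - (2 * of_nat n + 5) * motzkin_summand (n+1) k
     + (of_nat n + 4) * motzkin_summand (n+2) k
   = motzkin_cert n (k+1) - motzkin_cert n k"
proof (cases "2*k \<le> n+2")
  case True
  define b where "b = n + 2 - 2*k"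
  have b: "(of_nat b :: rat) = of_nat n + 2 - 2 * of_nat k"
    using True by (simp add: b_def of_nat_diff)
  have i0: "inv_fact_diff n (2*k) = inv_fact_diff b 2"
    using inv_fact_diff_add[of n 2 "2*k"] inv_fact_diff_add_left[OF True, of 2] by (simp add: b_def)
  have i1: "inv_fact_diff (n+1) (2*k) = inv_fact_diff b 1"
    using inv_fact_diff_add[of "n+1" 1 "2*k"] inv_fact_diff_add_left[OF True, of 1] by (simp add: b_def)
  have i2: "inv_fact_diff (n+2) (2*k) = inv_fact_diff b 0"
    using inv_fact_diff_add_left[OF True, of 0] by (simp add: b_def)
  have i3: "inv_fact_diff (n+2) (2*(k+1)) = inv_fact_diff b 2"
    using inv_fact_diff_add_left[OF True, of 2] by (simp add: b_def)
  define X where "X = fact n / (fact b * fact k * fact (k+1) :: rat)"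
  have s0: "motzkin_summand n k = X * ((of_nat n + 2 - 2 * of_nat k) * (of_nat n + 1 - 2 * of_nat k))"
    unfolding motzkin_summand_fact i0
    unfolding inv_fact_diff_eq_prod X_def
    by (simp del: fact_Suc add: b numeral_2_eq_2 field_simps)
  have s1: "motzkin_summand (n+1) k = X * (of_nat n + 1) * (of_nat n + 2 - 2 * of_nat k)"
    unfolding motzkin_summand_fact i1
    unfolding inv_fact_diff_eq_prod X_def
    by (simp del: fact_Suc add: b fact_Suc[of n] field_simps)
  have s2: "motzkin_summand (n+2) k = X * (of_nat n + 1) * (of_nat n + 2)"
    unfolding motzkin_summand_fact i2
    unfolding inv_fact_diff_eq_prod X_def
    by (simp del: fact_Suc add: fact_Suc[of n] fact_Suc[of "Suc n"] field_simps)
  have c0: "motzkin_cert n k = X * (-4 * (of_nat n+1) * of_nat k * (of_nat k + 1))"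
    unfolding motzkin_cert_def i2
    unfolding inv_fact_diff_eq_prod X_def by (simp del: fact_Suc add: field_simps)
  have "motzkin_cert n (k+1) = fact n / (fact b * fact (k+1) * fact (k+1)) * (of_nat k + 1)
      * (-4 * (of_nat n+1) * (of_nat n + 2 - 2 * of_nat k) * (of_nat n + 1 - 2 * of_nat k))"
    unfolding motzkin_cert_def i3
    unfolding inv_fact_diff_eq_prod
    apply (simp del: fact_Suc add: b numeral_2_eq_2 fact_Suc[of "Suc k"])
    by (simp add: mult.assoc algebra_simps del: fact_Suc)
  also have "fact n / (fact b * fact (k+1) * fact (k+1)) * (of_nat k + 1) = X"
    unfolding X_def by (simp add: divide_simps of_nat_add_pos_nonzero)
  finally have c1: "motzkin_cert n (k+1)
      = X * (-4 * (of_nat n+1) * (of_nat n + 2 - 2 * of_nat k) * (of_nat n + 1 - 2 * of_nat k))" .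
  show ?thesis unfolding s0 s1 s2 c0 c1 by (simp add: algebra_simps)
next
  case False
  then show ?thesis by (simp add: motzkin_summand_fact motzkin_cert_def inv_fact_diff_def)
qed

lemma motzkin_recurrence:
  "(of_nat n + 4) * motzkin (n+2) = (2 * of_nat n + 5) * motzkin (n+1) + 3 * (of_nat n + 1) * motzkin n"
proof -
  have "(\<Sum>k=0..n+2. -3 * of_nat (n+1) * motzkin_summand n k
          - (2 * of_nat n + 5) * motzkin_summand (n+1) k + (of_nat n + 4) * motzkin_summand (n+2) k)
      = (\<Sum>k=0..n+2. motzkin_cert n (Suc k) - motzkin_cert n k)"
    using motzkin_summand_telescope by simp
  also have "\<dots> = 0"
    by (subst sum_Suc_diff) (simp_all add: motzkin_cert_def inv_fact_diff_def)
  moreover have "motzkin n = (\<Sum>k=0..n+2. motzkin_summand n k)"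
      "motzkin (n+1) = (\<Sum>k=0..n+2. motzkin_summand (n+1) k)"
      "motzkin (n+2) = (\<Sum>k=0..n+2. motzkin_summand (n+2) k)"
    by (intro motzkin_eq_sum_summand; simp)+
  ultimately have "-3 * of_nat (n+1) * motzkin n - (2 * of_nat n + 5) * motzkin (n+1)
      + (of_nat n + 4) * motzkin (n+2) = 0"
    by (simp only: sum.distrib sum_subtractf sum_distrib_left)
  then show ?thesis by (simp add: algebra_simps)
qed

lemma motzkin_Suc_Suc:
  "motzkin (n+2) = ((2 * of_nat n + 5) * motzkin (n+1) + 3 * (of_nat n + 1) * motzkin n) / (of_nat n + 4)"
  using motzkin_recurrence[of n] by (simp add: field_simps of_nat_add_pos_nonzero)

subsection \<open>The left-hand side\<close>

definition motzkin_sq_sum :: "nat \<Rightarrow> rat" where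
  "motzkin_sq_sum n = (\<Sum>k = 1..n. (2 * of_nat k + 1) * (motzkin k)^2)"

definition motzkin_sq_form :: "rat \<Rightarrow> rat \<Rightarrow> rat \<Rightarrow> rat" where
  "motzkin_sq_form w x y =
     -(81 + 198*w + 153*w^2 + 36*w^3)/4 * x^2 + (63/2 + 60*w + 69/2*w^2 + 6*w^3) * x * y
     - (45/4 + 33/2*w + 29/4*w^2 + w^3) * y^2"

lemma motzkin_sq_form_step:
  fixes w x y :: rat
  assumes "w \<ge> 0"
  shows "motzkin_sq_form w x y + (2*w+3) * y^2
    = motzkin_sq_form (w+1) y (((2*w+5)*y + 3*(w+1)*x)/(w+4))"
proof -
  have "w + 4 \<noteq> 0" using assms by linarith
  then show ?thesis unfolding motzkin_sq_form_def by (simp add: divide_simps) algebra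
qed

lemma motzkin_sq_sum_closed_form:
  "motzkin_sq_sum n = motzkin_sq_form (of_nat n) (motzkin n) (motzkin (n+1))"
proof (induction n)
  case 0
  show ?case by (simp add: motzkin_sq_sum_def motzkin_sq_form_def motzkin_def)
next
  case (Suc n)
  have "motzkin_sq_sum (Suc n) = motzkin_sq_sum n + (2 * of_nat n + 3) * (motzkin (n+1))^2"
    unfolding motzkin_sq_sum_def by (simp add: algebra_simps)
  also have "\<dots> = motzkin_sq_form (of_nat (Suc n)) (motzkin (n+1)) (motzkin (n+2))"
    using Suc motzkin_sq_form_step[of "of_nat n" "motzkin n" "motzkin (n+1)"] motzkin_Suc_Suc[of n]
    by (simp add: add_ac)
  finally show ?case by simp
qed

subsection \<open>The common recurrence\<close>

definition rec_coeff0 :: "rat \<Rightarrow> rat" where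
  "rec_coeff0 x = 170100 + 388800*x + 365769*x^2 + 181251*x^3 + 49896*x^4 + 7236*x^5 + 432*x^6"

definition rec_coeff1 :: "rat \<Rightarrow> rat" where
  "rec_coeff1 x = -106596 - 250641*x - 244602*x^2 - 126105*x^3 - 36108*x^4 - 5436*x^5 - 336*x^6"

definition rec_coeff2 :: "rat \<Rightarrow> rat" where
  "rec_coeff2 x = -82944 - 177300*x - 152433*x^2 - 67939*x^3 - 16640*x^4 - 2132*x^5 - 112*x^6"

definition rec_coeff3 :: "rat \<Rightarrow> rat" where
  "rec_coeff3 x = 16500 + 34325*x + 28450*x^2 + 12089*x^3 + 2788*x^4 + 332*x^5 + 16*x^6"

lemma rec_coeff3_of_nat_pos: "rec_coeff3 (of_nat m) > 0"
  unfolding rec_coeff3_def by (intro add_pos_nonneg mult_nonneg_nonneg zero_le_power) simp_all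

text \<open>The coefficients are partial sums because motzkin_sq_sum (n+j) is motzkin_sq_sum n plus the
  increments (2m+3) M(m+1)^2; u, v, m2, m3 stand for M(n), ..., M(n+3).\<close>

lemma motzkin_sq_form_recurrence:
  fixes w u v m2 m3 :: rat
  assumes w: "w \<ge> 0"
    and m2: "m2 = ((2*w+5)*v + 3*(w+1)*u)/(w+4)"
    and m3: "m3 = ((2*w+7)*m2 + 3*(w+2)*v)/(w+5)"
  shows "(rec_coeff0 w + rec_coeff1 w + rec_coeff2 w + rec_coeff3 w) * motzkin_sq_form w u v
     + (rec_coeff1 w + rec_coeff2 w + rec_coeff3 w) * (2*w+3) * v^2
     + (rec_coeff2 w + rec_coeff3 w) * (2*w+5) * m2^2 + rec_coeff3 w * (2*w+7) * m3^2 = 0"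
proof -
  have "w + 4 \<noteq> 0" "w + 5 \<noteq> 0" using w by linarith+
  then show ?thesis
    unfolding m3 m2 motzkin_sq_form_def rec_coeff0_def rec_coeff1_def rec_coeff2_def rec_coeff3_def
    by (simp add: divide_simps) algebra
qed

lemma motzkin_sq_sum_recurrence:
  "rec_coeff0 (of_nat n) * motzkin_sq_sum n + rec_coeff1 (of_nat n) * motzkin_sq_sum (n+1)
   + rec_coeff2 (of_nat n) * motzkin_sq_sum (n+2) + rec_coeff3 (of_nat n) * motzkin_sq_sum (n+3) = 0"
proof -
  define w where "w = (of_nat n :: rat)"
  have w0: "w \<ge> 0" unfolding w_def by simp
  have sq_sum_Suc: "motzkin_sq_sum (Suc m) = motzkin_sq_sum m + (2 * of_nat m + 3) * (motzkin (m+1))^2"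
    for m unfolding motzkin_sq_sum_def by (simp add: algebra_simps)
  have m3: "motzkin (n+3) = ((2*w+7) * motzkin (n+2) + 3*(w+2) * motzkin (n+1))/(w+5)"
    using motzkin_Suc_Suc[of "n+1"] unfolding w_def by (simp add: algebra_simps eval_nat_numeral)
  have l1: "motzkin_sq_sum (n+1) = motzkin_sq_sum n + (2*w+3) * (motzkin (n+1))^2"
    using sq_sum_Suc[of n] unfolding w_def by simp
  have l2: "motzkin_sq_sum (n+2) = motzkin_sq_sum (n+1) + (2*w+5) * (motzkin (n+2))^2"
    using sq_sum_Suc[of "n+1"] unfolding w_def by (simp add: algebra_simps)
  have l3: "motzkin_sq_sum (n+3) = motzkin_sq_sum (n+2) + (2*w+7) * (motzkin (n+3))^2"
    using sq_sum_Suc[of "n+2"] unfolding w_def by (simp add: algebra_simps eval_nat_numeral)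
  have "rec_coeff0 w * motzkin_sq_sum n + rec_coeff1 w * motzkin_sq_sum (n+1)
      + rec_coeff2 w * motzkin_sq_sum (n+2) + rec_coeff3 w * motzkin_sq_sum (n+3) = 0"
    unfolding l3 l2 l1 motzkin_sq_sum_closed_form[of n]
    using motzkin_sq_form_recurrence[OF w0 motzkin_Suc_Suc[of n, folded w_def] m3]
    unfolding w_def by algebra
  then show ?thesis unfolding w_def .
qed

subsection \<open>The right-hand side\<close>

definition rhs_prefactor :: "rat \<Rightarrow> rat \<Rightarrow> rat" where
  "rhs_prefactor x y = (4*x - 2*y + 3) * (x + y + 2) / (x + 2)"

definition rhs_summand :: "nat \<Rightarrow> nat \<Rightarrow> rat" where
  "rhs_summand n k = ((4 * of_nat n - 2 * of_nat k + 3) * (of_nat n + of_nat k + 2) / (of_nat n + 2))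
        * of_nat ((n+k+1) choose (2*k)) * of_nat ((2*k) choose k) * of_nat ((2*k+1) choose k)
        * (-3 :: rat) ^ (n + 1 - k)"

definition rhs_sum :: "nat \<Rightarrow> rat" where
  "rhs_sum n = (\<Sum>k=0..n+1. rhs_summand n k)"

lemma rhs_summand_fact:
  "rhs_summand n k = rhs_prefactor (of_nat n) (of_nat k) * (-3) ^ (n+1-k) * fact (n+k+1)
     * inv_fact_diff (n+1) k * fact (2*k+1) / (fact k ^ 3 * fact (k+1))"
proof (cases "k \<le> n+1")
  case True
  have "n + k + 1 - 2*k = n + 1 - k" "2*k + 1 - k = k + 1" using True by arith+
  then have b: "of_nat ((n+k+1) choose (2*k)) = (fact (n+k+1) / (fact (2*k) * fact (n+1-k)) :: rat)"
      "of_nat ((2*k) choose k) = (fact (2*k) / (fact k * fact k) :: rat)"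
      "of_nat ((2*k+1) choose k) = (fact (2*k+1) / (fact k * fact (k+1)) :: rat)"
    using True by (simp_all add: binomial_fact)
  have p: "(4 * of_nat n - 2 * of_nat k + 3) * (of_nat n + of_nat k + 2) / (of_nat n + 2)
      = rhs_prefactor (of_nat n) (of_nat k)"
    by (simp add: rhs_prefactor_def)
  show ?thesis using True unfolding rhs_summand_def b p
    by (simp del: fact_Suc add: inv_fact_diff_def field_simps power3_eq_cube)
next
  case False
  then have "(n+k+1) choose (2*k) = 0" by (simp add: binomial_eq_0)
  then show ?thesis using False by (simp add: rhs_summand_def inv_fact_diff_def)
qed

lemma rhs_summand_eq_0: "n+1 < k \<Longrightarrow> rhs_summand n k = 0"
  by (simp add: rhs_summand_fact inv_fact_diff_def)

lemma rhs_sum_eq_sum_summand: "n+1 \<le> K \<Longrightarrow> rhs_sum n = (\<Sum>k=0..K. rhs_summand n k)"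
  unfolding rhs_sum_def by (rule sum.mono_neutral_left) (auto intro: rhs_summand_eq_0)

text \<open>The hypergeometric term of which rhs_summand (n+j) k, j \<le> 3, and the certificate are
  rational multiples.\<close>

definition rhs_hyp :: "nat \<Rightarrow> nat \<Rightarrow> rat" where
  "rhs_hyp n k = (-3) ^ (n+4-k) * fact (n+k+1) * inv_fact_diff (n+4) k * fact (2*k+1)
     / (fact k ^ 3 * fact (k+1))"

lemma rhs_summand_shift:
  assumes k: "k \<le> n+4" and j: "j \<le> 3"
  shows "rhs_summand (n+j) k = rhs_hyp n k * (rhs_prefactor (of_nat n + of_nat j) (of_nat k)
     * (-1/3)^(3-j) * (\<Prod>i<j. of_nat (n+k+2+i)) * (\<Prod>l<3-j. (of_nat (n+4-k) - of_nat l)))"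
proof -
  define a where "a = n+4-k"
  have "inv_fact_diff (n+j+1) k = inv_fact_diff (n+j+1 + (3-j)) (k + (3-j))"
    by (rule inv_fact_diff_add[symmetric])
  also have "\<dots> = inv_fact_diff a (3-j)"
    unfolding a_def using inv_fact_diff_add_left[OF k, of "3-j"] j by (simp add: add.commute)
  finally have i: "inv_fact_diff (n+j+1) k = inv_fact_diff a (3-j)" .
  have p: "n+j+1-k = a - (3-j)" unfolding a_def using j k by arith
  have f: "(fact (n+j+k+1) :: rat) = fact (n+k+1) * (\<Prod>i<j. of_nat (n+k+2+i))"
    using fact_add_eq_prod[of "n+k+1" j] by (simp add: algebra_simps)
  have pw: "(-3::rat) ^ (a - (3-j)) * inv_fact_diff a (3-j)
      = inv_fact_diff a (3-j) * (-3) ^ a * (-1/3) ^ (3-j)"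
    using power_diff_mult_inv_fact_diff[of "-3::rat" a "3-j"] by simp
  have h: "inv_fact_diff (n+4) k = 1 / fact a" unfolding a_def using k by (simp add: inv_fact_diff_def)
  have "rhs_summand (n+j) k = rhs_prefactor (of_nat (n+j)) (of_nat k)
      * ((-3) ^ (a - (3-j)) * inv_fact_diff a (3-j)) * fact (n+j+k+1)
      * fact (2*k+1) / (fact k ^ 3 * fact (k+1))"
    unfolding rhs_summand_fact p[symmetric] i[symmetric] by (simp add: algebra_simps)
  also have "\<dots> = rhs_prefactor (of_nat n + of_nat j) (of_nat k)
      * ((\<Prod>l<3-j. (of_nat a - of_nat l)) / fact a * (-3) ^ a * (-1/3) ^ (3-j))
      * (fact (n+k+1) * (\<Prod>i<j. of_nat (n+k+2+i))) * fact (2*k+1) / (fact k ^ 3 * fact (k+1))"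
    unfolding pw unfolding f unfolding inv_fact_diff_eq_prod by simp
  also have "\<dots> = rhs_hyp n k * (rhs_prefactor (of_nat n + of_nat j) (of_nat k) * (-1/3)^(3-j)
     * (\<Prod>i<j. of_nat (n+k+2+i)) * (\<Prod>l<3-j. (of_nat (n+4-k) - of_nat l)))"
    unfolding rhs_hyp_def h a_def[symmetric] by (simp del: fact_Suc add: field_simps)
  finally show ?thesis .
qed

lemma rhs_hyp_Suc:
  assumes k: "k \<le> n+4"
  shows "rhs_hyp n (k+1) = rhs_hyp n k * ((-1/3) * (of_nat n + of_nat k + 2) * (of_nat n + 4 - of_nat k)
     * (2 * of_nat k + 2) * (2 * of_nat k + 3) / ((of_nat k + 1)^3 * (of_nat k + 2)))"
proof (cases "k = n+4")
  case True
  then show ?thesis by (simp add: rhs_hyp_def inv_fact_diff_def)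
next
  case False
  then obtain a where a: "n+4-k = Suc a" using k by (metis Suc_diff_Suc le_neq_implies_less add_Suc_right)
  have "(of_nat (n+4-k) :: rat) = of_nat n + 4 - of_nat k" using k by (simp add: of_nat_diff)
  then have "(of_nat a :: rat) = of_nat n + 3 - of_nat k" using a by simp
  then have e5: "(fact (Suc a) :: rat) = (of_nat n + 4 - of_nat k) * fact a" by simp
  have e1: "(fact (n + (k+1) + 1) :: rat) = (of_nat n + of_nat k + 2) * fact (n+k+1)"
    by (simp add: algebra_simps)
  have e2: "(fact (2*(k+1)+1) :: rat) = (2 * of_nat k + 2) * (2 * of_nat k + 3) * fact (2*k+1)"
    by (simp add: algebra_simps)
  have e3: "(fact (k+1) :: rat) = (of_nat k + 1) * fact k" by simp
  have e4: "(fact (k+1+1) :: rat) = (of_nat k + 2) * (of_nat k + 1) * fact k" by (simp add: algebra_simps)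
  have "(of_nat k :: rat) < of_nat (n+4)" using False k by (simp only: of_nat_less_iff)
  then have "(of_nat n + 4 :: rat) \<noteq> of_nat k" by simp
  moreover have a1: "n+4-(k+1) = a" "k+1 \<le> n+4" using a by simp_all
  then have h: "inv_fact_diff (n+4) k = 1 / fact (Suc a)" "inv_fact_diff (n+4) (k+1) = 1 / fact a"
    using a k unfolding inv_fact_diff_def by simp_all
  ultimately show ?thesis
    unfolding rhs_hyp_def h a a1 e1 e2 e3 e4 e5
    by (simp del: fact_Suc add: divide_simps of_nat_add_pos_nonzero)
qed

definition rhs_cert_poly :: "rat \<Rightarrow> rat \<Rightarrow> rat" where
  "rhs_cert_poly x y = -83790 - 33075*y + 4410*y^2 - 176211*x - 50260*x*y + 6244*x*y^2
     - 152398*x^2 - 29832*x^2*y + 3272*x^2*y^2 - 69388*x^3 - 8608*x^3*y + 752*x^3*y^2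
     - 17544*x^4 - 1200*x^4*y + 64*x^4*y^2 - 2336*x^5 - 64*x^5*y - 128*x^6"

definition rhs_cert :: "nat \<Rightarrow> nat \<Rightarrow> rat" where
  "rhs_cert n k = 2 * (2 * of_nat n + 3) * of_nat k^2 * (of_nat k + 1)
     * rhs_cert_poly (of_nat n) (of_nat k) * rhs_hyp n k"

text \<open>rhs_cert_identity below with its denominators 27 (x+2)(x+3)(x+4)(x+5) cleared.\<close>

lemma rhs_cert_poly_identity:
  fixes x y :: rat
  shows "rec_coeff0 x * (4*x-2*y+3)*(x+y+2)*(-1)*((x+4-y)*(x+3-y)*(x+2-y))*(x+3)*(x+4)*(x+5)
    + rec_coeff1 x * (4*(x+1)-2*y+3)*(x+1+y+2)*3*(x+y+2)*((x+4-y)*(x+3-y))*(x+2)*(x+4)*(x+5)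
    + rec_coeff2 x * (4*(x+2)-2*y+3)*(x+2+y+2)*(-9)*(x+y+2)*(x+y+3)*(x+4-y)*(x+2)*(x+3)*(x+5)
    + rec_coeff3 x * (4*(x+3)-2*y+3)*(x+3+y+2)*27*((x+y+2)*(x+y+3)*(x+y+4))*(x+2)*(x+3)*(x+4)
    = (-36*(2*x+3)*(x+y+2)*(x+4-y)*(2*y+3)*rhs_cert_poly x (y+1)
       - 54*(2*x+3)*y^2*(y+1)*rhs_cert_poly x y) * (x+2)*(x+3)*(x+4)*(x+5)"
  unfolding rec_coeff0_def rec_coeff1_def rec_coeff2_def rec_coeff3_def rhs_cert_poly_def by algebra

lemma rhs_cert_identity:
  fixes x y :: rat
  assumes x: "x \<ge> 0"
  shows "rec_coeff0 x * (rhs_prefactor x y * (-1/27) * ((x+4-y)*(x+3-y)*(x+2-y)))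
       + rec_coeff1 x * (rhs_prefactor (x+1) y * (1/9) * (x+y+2) * ((x+4-y)*(x+3-y)))
       + rec_coeff2 x * (rhs_prefactor (x+2) y * (-1/3) * (x+y+2)*(x+y+3) * (x+4-y))
       + rec_coeff3 x * (rhs_prefactor (x+3) y * ((x+y+2)*(x+y+3)*(x+y+4)))
     = -(4/3)*(2*x+3)*(x+y+2)*(x+4-y)*(2*y+3) * rhs_cert_poly x (y+1)
       - 2*(2*x+3)*y^2*(y+1)*rhs_cert_poly x y"
proof -
  have "x + 2 \<noteq> 0" "x + 1 + 2 \<noteq> 0" "x + 2 + 2 \<noteq> 0" "x + 3 + 2 \<noteq> 0" using x by linarith+
  then show ?thesis unfolding rhs_prefactor_def
    using rhs_cert_poly_identity[of x y] by (simp add: divide_simps) algebra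
qed

lemma rhs_summand_telescope:
  "rec_coeff0 (of_nat n) * rhs_summand n k + rec_coeff1 (of_nat n) * rhs_summand (n+1) k
   + rec_coeff2 (of_nat n) * rhs_summand (n+2) k + rec_coeff3 (of_nat n) * rhs_summand (n+3) k
   = rhs_cert n (k+1) - rhs_cert n k"
proof (cases "k \<le> n+4")
  case True
  define x where "x = (of_nat n :: rat)"
  define y where "y = (of_nat k :: rat)"
  have x0: "x \<ge> 0" unfolding x_def by simp
  have nk: "(of_nat (n+4-k) :: rat) = x + 4 - y" unfolding x_def y_def using True by (simp add: of_nat_diff)
  have t0: "rhs_summand n k = rhs_hyp n k * (rhs_prefactor x y * (-1/27) * ((x+4-y)*(x+3-y)*(x+2-y)))"
    using rhs_summand_shift[OF True, of 0]
    by (simp add: nk numeral_3_eq_3 x_def[symmetric] y_def[symmetric] algebra_simps)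
  have t1: "rhs_summand (n+1) k = rhs_hyp n k * (rhs_prefactor (x+1) y * (1/9) * (x+y+2) * ((x+4-y)*(x+3-y)))"
    using rhs_summand_shift[OF True, of 1]
    by (simp add: nk numeral_2_eq_2 numeral_3_eq_3 x_def[symmetric] y_def[symmetric] algebra_simps)
  have t2: "rhs_summand (n+2) k = rhs_hyp n k * (rhs_prefactor (x+2) y * (-1/3) * (x+y+2)*(x+y+3) * (x+4-y))"
    using rhs_summand_shift[OF True, of 2]
    apply (simp add: nk numeral_2_eq_2 numeral_3_eq_3 x_def[symmetric] y_def[symmetric])
    by (simp add: add_ac)
  have t3: "rhs_summand (n+3) k = rhs_hyp n k * (rhs_prefactor (x+3) y * ((x+y+2)*(x+y+3)*(x+y+4)))"
    using rhs_summand_shift[OF True, of 3]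
    by (simp add: nk numeral_2_eq_2 numeral_3_eq_3 x_def[symmetric] y_def[symmetric] algebra_simps)
  have c0: "rhs_cert n k = rhs_hyp n k * (2*(2*x+3)*y^2*(y+1)*rhs_cert_poly x y)"
    unfolding rhs_cert_def x_def y_def by (simp add: algebra_simps)
  have "rhs_cert n (k+1) = 2*(2*x+3) * (y+1)^2 * (y+2) * rhs_cert_poly x (y+1) * rhs_hyp n (k+1)"
    unfolding rhs_cert_def x_def y_def by (simp add: algebra_simps)
  also have "\<dots> = rhs_hyp n k * (-(4/3)*(2*x+3)*(x+y+2)*(x+4-y)*(2*y+3) * rhs_cert_poly x (y+1))"
    unfolding rhs_hyp_Suc[OF True] x_def[symmetric] y_def[symmetric]
    using of_nat_add_pos_nonzero[where n=k] unfolding y_def[symmetric]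
    by (simp add: divide_simps) (simp add: algebra_simps power2_eq_square power3_eq_cube)
  finally have c1: "rhs_cert n (k+1)
      = rhs_hyp n k * (-(4/3)*(2*x+3)*(x+y+2)*(x+4-y)*(2*y+3) * rhs_cert_poly x (y+1))" .
  show ?thesis
    unfolding x_def[symmetric] t0 t1 t2 t3 c0 c1 using rhs_cert_identity[OF x0, of y] by algebra
next
  case False
  then show ?thesis by (simp add: rhs_summand_eq_0 rhs_cert_def rhs_hyp_def inv_fact_diff_def)
qed

lemma rhs_sum_recurrence:
  "rec_coeff0 (of_nat n) * rhs_sum n + rec_coeff1 (of_nat n) * rhs_sum (n+1)
   + rec_coeff2 (of_nat n) * rhs_sum (n+2) + rec_coeff3 (of_nat n) * rhs_sum (n+3) = 0"
proof -
  have "(\<Sum>k=0..n+4. rec_coeff0 (of_nat n) * rhs_summand n k + rec_coeff1 (of_nat n) * rhs_summand (n+1) k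
          + rec_coeff2 (of_nat n) * rhs_summand (n+2) k + rec_coeff3 (of_nat n) * rhs_summand (n+3) k)
      = (\<Sum>k=0..n+4. rhs_cert n (Suc k) - rhs_cert n k)"
    using rhs_summand_telescope by simp
  also have "\<dots> = 0"
    by (subst sum_Suc_diff) (simp_all add: rhs_cert_def rhs_hyp_def inv_fact_diff_def)
  moreover have "rhs_sum n = (\<Sum>k=0..n+4. rhs_summand n k)"
      "rhs_sum (n+1) = (\<Sum>k=0..n+4. rhs_summand (n+1) k)"
      "rhs_sum (n+2) = (\<Sum>k=0..n+4. rhs_summand (n+2) k)"
      "rhs_sum (n+3) = (\<Sum>k=0..n+4. rhs_summand (n+3) k)"
    by (intro rhs_sum_eq_sum_summand; simp)+
  ultimately show ?thesis by (simp only: sum.distrib sum_distrib_left)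
qed

theorem lemma2p2:
  fixes n :: nat
  assumes "n \<ge> 1"
  shows "(\<Sum>k = 1..n. (2 * of_nat k + 1) * (motzkin k)^2) =
    (\<Sum>k = 0..n+1. ((4 * of_nat n - 2 * of_nat k + 3) * (of_nat n + of_nat k + 2) / (of_nat n + 2))
        * of_nat ((n+k+1) choose (2*k)) * of_nat ((2*k) choose k) * of_nat ((2*k+1) choose k)
        * (-3 :: rat) ^ (n + 1 - k))"
proof -
  have "motzkin_sq_sum n = rhs_sum n"
  proof (rule recurrence3_unique[where p = "\<lambda>n. rec_coeff0 (of_nat n)"
        and q = "\<lambda>n. rec_coeff1 (of_nat n)" and r = "\<lambda>n. rec_coeff2 (of_nat n)"
        and s = "\<lambda>n. rec_coeff3 (of_nat n)"])
    show "rec_coeff3 (of_nat m) \<noteq> 0" for m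
      using rec_coeff3_of_nat_pos[of m] by simp
  qed (fact motzkin_sq_sum_recurrence rhs_sum_recurrence
      | simp add: motzkin_sq_sum_def rhs_sum_def rhs_summand_def motzkin_def eval_nat_numeral
          binomial_Suc_Suc)+
  then show ?thesis unfolding motzkin_sq_sum_def rhs_sum_def rhs_summand_def .
qed

end
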